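(* Let $p$ be a prime, let $m\ge 0$ be an integer, and let $f:\mathbb{Z}_p\to\mathbb{Z}_p$ be an arithmetic differential operator of order $m$. Then $f$ is an analytic function of level $m$.
   Context: $\mathbb{Z}_p$ denotes the ring of $p$-adic integers with the $p$-adic norm $|\cdot|_p$, $|p|_p=p^{-1}$. The Fermat quotient operator is $\delta:\mathbb{Z}_p\to\mathbb{Z}_p$, $\delta a=(a-a^p)/p$, and $\delta^i$ denotes its $i$-th iterate. A power series $F=\sum_{\alpha} a_\alpha x^\alpha\in\mathbb{Z}_p[[x_0,\dots,x_k]]$ is called restricted if $a_\alpha\to 0$ $p$-adically as $|\alpha|=\alpha_0+\dots+\alpha_k\to\infty$. A function $f:\mathbb{Z}_p\to\mathbb{Z}_p$ is an arithmetic differential operator of order $m$ if there is a restricted power series $F\in\mathbb{Z}_p[[x_0,\dots,x_m]]$ with $f(a)=F(a,\delta a,\dots,\delta^m a)$ for all $a\in\mathbb{Z}_p$. A function $f:\mathbb{Z}_p\to\mathbb{Z}_p$ is analytic of level $m$ if for every $a\in\mathbb{Z}_p$ there is a restricted power series $F_a\in\mathbb{Z}_p[[x]]$ (one variable) such that $f(a+p^m u)=F_a(u)$ for all $u\in\mathbb{Z}_p$. *)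

theory Defs
  imports Main "HOL-Computational_Algebra.Primes"
begin

text \<open>p-adic integers are represented by their compatible sequences of residues:
  a p-adic integer a is a function n \<mapsto> a mod p^n, with values in {0..<p^n}.\<close>

type_synonym padic_int = "nat \<Rightarrow> int"

definition padic :: "nat \<Rightarrow> padic_int set" where
  "padic p = {a. \<forall>n. 0 \<le> a n \<and> a n < int p ^ n \<and> a (Suc n) mod int p ^ n = a n}"

definition padd :: "nat \<Rightarrow> padic_int \<Rightarrow> padic_int \<Rightarrow> padic_int" where
  "padd p a b = (\<lambda>n. (a n + b n) mod int p ^ n)"

definition pmul :: "nat \<Rightarrow> padic_int \<Rightarrow> padic_int \<Rightarrow> padic_int" where
  "pmul p a b = (\<lambda>n. (a n * b n) mod int p ^ n)"

definition pint :: "nat \<Rightarrow> int \<Rightarrow> padic_int" where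
  "pint p c = (\<lambda>n. c mod int p ^ n)"

text \<open>Fermat quotient delta a = (a - a^p)/p, computed level by level:
  residue mod p^n of (a - a^p)/p is ((a - a^p) mod p^(n+1)) div p.\<close>
definition pdelta :: "nat \<Rightarrow> padic_int \<Rightarrow> padic_int" where
  "pdelta p a = (\<lambda>n. ((a (Suc n) - a (Suc n) ^ p) mod int p ^ Suc n) div int p)"

definition multi_idx :: "nat \<Rightarrow> (nat \<Rightarrow> nat) set" where
  "multi_idx k = {\<alpha>. \<forall>i>k. \<alpha> i = 0}"

definition mdeg :: "nat \<Rightarrow> (nat \<Rightarrow> nat) \<Rightarrow> nat" where
  "mdeg k \<alpha> = (\<Sum>i\<le>k. \<alpha> i)"

text \<open>A power series in x_0..x_k over Z_p is a coefficient function on multi-indices.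
  It is restricted if its coefficients tend to 0 p-adically as |alpha| \<rightarrow> \<infinity>, i.e.
  for each n, a_alpha \<equiv> 0 mod p^n for all alpha of large degree.\<close>
definition restricted :: "nat \<Rightarrow> nat \<Rightarrow> ((nat \<Rightarrow> nat) \<Rightarrow> padic_int) \<Rightarrow> bool" where
  "restricted p k F \<longleftrightarrow> (\<forall>\<alpha>\<in>multi_idx k. F \<alpha> \<in> padic p) \<and>
     (\<forall>n. \<exists>N. \<forall>\<alpha>\<in>multi_idx k. mdeg k \<alpha> \<ge> N \<longrightarrow> F \<alpha> n = 0)"

definition ps_partial :: "nat \<Rightarrow> nat \<Rightarrow> ((nat \<Rightarrow> nat) \<Rightarrow> padic_int) \<Rightarrow> (nat \<Rightarrow> padic_int)
    \<Rightarrow> nat \<Rightarrow> nat \<Rightarrow> int" where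
  "ps_partial p k F x N n =
     (\<Sum>\<alpha>\<in>{\<alpha>\<in>multi_idx k. mdeg k \<alpha> < N}. F \<alpha> n * (\<Prod>i\<le>k. x i n ^ \<alpha> i)) mod int p ^ n"

definition ps_sums :: "nat \<Rightarrow> nat \<Rightarrow> ((nat \<Rightarrow> nat) \<Rightarrow> padic_int) \<Rightarrow> (nat \<Rightarrow> padic_int)
    \<Rightarrow> padic_int \<Rightarrow> bool" where
  "ps_sums p k F x y \<longleftrightarrow> y \<in> padic p \<and>
     (\<forall>n. \<exists>N. \<forall>N'\<ge>N. y n = ps_partial p k F x N' n)"

definition arith_diff_op :: "nat \<Rightarrow> nat \<Rightarrow> (padic_int \<Rightarrow> padic_int) \<Rightarrow> bool" where
  "arith_diff_op p m f \<longleftrightarrow> (\<exists>F. restricted p m F \<and>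
     (\<forall>a\<in>padic p. ps_sums p m F (\<lambda>i. (pdelta p ^^ i) a) (f a)))"

definition analytic_level :: "nat \<Rightarrow> nat \<Rightarrow> (padic_int \<Rightarrow> padic_int) \<Rightarrow> bool" where
  "analytic_level p m f \<longleftrightarrow> (\<forall>a\<in>padic p. \<exists>G. restricted p 0 G \<and>
     (\<forall>u\<in>padic p. ps_sums p 0 G (\<lambda>_. u) (f (padd p a (pmul p (pint p (int p ^ m)) u)))))"

end

theory Submission
  imports Defs "HOL-Computational_Algebra.Polynomial" "HOL-Number_Theory.Cong" "HOL-Library.FuncSet"
begin

text \<open>Write the argument as \<open>a + p^m u\<close>. For \<open>i \<le> m\<close>, \<open>\<delta>\<^sup>i(a + p^m u)\<close> is a restricted
  power series in \<open>u\<close> that is congruent to a constant modulo \<open>p^(m-i)\<close>: if a series \<open>S\<close> is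
  congruent to \<open>c\<close> modulo \<open>p^(k+1)\<close>, then by Fermat \<open>S - S^p \<equiv> c - c^p \<equiv> 0\<close> modulo \<open>p\<close>, so
  \<open>\<delta> S = (S - S^p)/p\<close> is again a series, congruent to a constant modulo \<open>p^k\<close>. Substituting
  these \<open>m + 1\<close> series into the restricted series of \<open>f\<close> yields a restricted series in \<open>u\<close>.
  Restricted series over \<open>\<int>\<^sub>p\<close> are handled through their reductions modulo \<open>p^n\<close>, which are
  compatible families of integer polynomials.\<close>

lemma prime_dvd_power_plus_one_diff:
  assumes "prime p"
  shows "int p dvd (x + 1) ^ p - x ^ p - 1"
proof -
  have p0: "p > 0" using assms prime_gt_0_nat by blast
  define g where "g k = of_nat (p choose k) * x ^ k" for k
  have "(x + 1) ^ p = sum g {..p}"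
    by (simp add: binomial_ring g_def)
  also have "\<dots> = sum g {0, p} + sum g ({..p} - {0, p})"
    by (subst sum.subset_diff[of "{0, p}"]) auto
  finally have "(x + 1) ^ p - x ^ p - 1 = sum g ({..p} - {0, p})"
    using p0 by (simp add: g_def)
  moreover have "int p dvd g k" if "k \<in> {..p} - {0, p}" for k
    using dvd_choose_prime[of k p] assms that by (auto simp: g_def int_dvd_int_iff)
  ultimately show ?thesis by (metis dvd_sum)
qed

lemma fermat_little_int:
  assumes "prime p"
  shows "[c ^ p = c] (mod int p)"
proof -
  have p0: "p > 0" using assms prime_gt_0_nat by blast
  have nat_case: "[int r ^ p = int r] (mod int p)" for r
  proof (induction r)
    case 0
    then show ?case using p0 by (simp add: zero_power)
  next
    case (Suc r)
    have "int p dvd ((int r + 1) ^ p - int r ^ p - 1) + (int r ^ p - int r)"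
      using prime_dvd_power_plus_one_diff[OF assms, of "int r"] Suc
      by (intro dvd_add) (simp_all add: cong_iff_dvd_diff dvd_diff_commute)
    also have "((int r + 1) ^ p - int r ^ p - 1) + (int r ^ p - int r) = int (Suc r) ^ p - int (Suc r)"
      by (simp add: add.commute)
    finally show ?case by (simp add: cong_iff_dvd_diff)
  qed
  have "[c = int (nat (c mod int p))] (mod int p)"
    using p0 by (simp add: cong_def)
  then show ?thesis using nat_case by (meson cong_pow cong_sym cong_trans)
qed

definition coeff_cong :: "'a::comm_ring_1 \<Rightarrow> 'a poly \<Rightarrow> 'a poly \<Rightarrow> bool" where
  "coeff_cong M S T \<longleftrightarrow> [:M:] dvd S - T"

lemma coeff_cong_refl: "coeff_cong M S S"
  by (simp add: coeff_cong_def)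

lemma coeff_cong_add_smult: "coeff_cong M (S + smult M Q) S"
  unfolding coeff_cong_def using dvd_triv_left[of "[:M:]" Q] by simp

lemma coeff_cong_diff:
  "coeff_cong M S T \<Longrightarrow> coeff_cong M S' T' \<Longrightarrow> coeff_cong M (S - S') (T - T')"
  unfolding coeff_cong_def using dvd_diff[of "[:M:]" "S - T" "S' - T'"] by (simp add: algebra_simps)

lemma coeff_cong_mult:
  "coeff_cong M S T \<Longrightarrow> coeff_cong M S' T' \<Longrightarrow> coeff_cong M (S * S') (T * T')"
proof -
  have "S * S' - T * T' = (S - T) * S' + T * (S' - T')" by (simp add: algebra_simps)
  then show "coeff_cong M S T \<Longrightarrow> coeff_cong M S' T' \<Longrightarrow> ?thesis"
    unfolding coeff_cong_def by (simp add: dvd_add dvd_mult dvd_mult2)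
qed

lemma coeff_cong_power: "coeff_cong M S T \<Longrightarrow> coeff_cong M (S ^ k) (T ^ k)"
  by (induction k) (auto simp: coeff_cong_refl intro: coeff_cong_mult)

lemma coeff_cong_sum:
  "(\<And>x. x \<in> A \<Longrightarrow> coeff_cong M (f x) (g x)) \<Longrightarrow> coeff_cong M (sum f A) (sum g A)"
  unfolding coeff_cong_def by (simp add: dvd_sum flip: sum_subtractf)

lemma coeff_cong_prod:
  "(\<And>x. x \<in> A \<Longrightarrow> coeff_cong M (f x) (g x)) \<Longrightarrow> coeff_cong M (prod f A) (prod g A)"
  by (induction A rule: infinite_finite_induct) (auto simp: coeff_cong_refl intro: coeff_cong_mult)

lemma coeff_cong_smult:
  assumes "[c = d] (mod M)" and "coeff_cong M S T"
  shows "coeff_cong M (smult c S) (smult d (T :: int poly))"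
proof -
  obtain k where "c - d = M * k"
    using assms(1) by (metis cong_iff_dvd_diff dvd_def)
  have "smult c S - smult d T = smult c (S - T) + smult (c - d) T"
    by (simp add: smult_diff_right smult_diff_left)
  also have "smult (c - d) T = [:M:] * smult k T"
    using \<open>c - d = M * k\<close> by (simp add: mult.commute)
  finally have "smult c S - smult d T = smult c (S - T) + [:M:] * smult k T" .
  then show ?thesis
    using assms(2) unfolding coeff_cong_def by (metis dvd_add dvd_smult dvd_triv_left)
qed

lemma coeff_cong_smult_cancel:
  fixes M c :: "'a::idom"
  assumes "coeff_cong (c * M) (smult c S) (smult c T)" and "c \<noteq> 0"
  shows "coeff_cong M S T"
proof -
  have "[:c:] * [:M:] = [:c * M:]" and "[:c:] * (S - T) = smult c S - smult c T"
    by (simp_all add: smult_diff_right)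
  with assms(1) have "[:c:] * [:M:] dvd [:c:] * (S - T)"
    unfolding coeff_cong_def by (simp only:)
  then show ?thesis
    using assms(2) unfolding coeff_cong_def dvd_mult_cancel_left by simp
qed

lemma coeff_cong_coeff:
  "coeff_cong M S T \<Longrightarrow> [coeff S j = coeff T j] (mod (M::int))"
  unfolding coeff_cong_def by (simp add: const_poly_dvd_iff cong_iff_dvd_diff)

lemma cong_poly: "[x = y] (mod M) \<Longrightarrow> [poly S x = poly S y] (mod (M::int))"
  by (induction S) (auto intro: cong_add cong_mult)

lemma coeff_cong_poly:
  assumes "coeff_cong M S T" and "[x = y] (mod M)"
  shows "[poly S x = poly T y] (mod (M::int))"
proof -
  obtain Q where "S - T = [:M:] * Q"
    using assms(1) unfolding coeff_cong_def by blast
  then have "[poly S x = poly T x] (mod M)"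
    by (simp add: cong_iff_dvd_diff flip: poly_diff)
  then show ?thesis using cong_poly[OF assms(2)] by (rule cong_trans)
qed

definition fermat_quotient_poly :: "nat \<Rightarrow> int poly \<Rightarrow> int poly" where
  "fermat_quotient_poly p S = map_poly (\<lambda>c. c div int p) (S - S ^ p)"

lemma fermat_quotient_poly_cong:
  assumes "prime p" and "coeff_cong (int p ^ Suc k) S [:c:]"
  shows "S - S ^ p = smult (int p) (fermat_quotient_poly p S)"
    and "coeff_cong (int p ^ k) (fermat_quotient_poly p S) [:(c - c ^ p) div int p:]"
proof -
  have "coeff_cong (int p ^ Suc k) (S - S ^ p) ([:c:] - [:c:] ^ p)"
    using assms(2) by (intro coeff_cong_diff coeff_cong_power)
  then obtain Q where "S - S ^ p = [:int p ^ Suc k:] * Q + ([:c:] - [:c:] ^ p)"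
    unfolding coeff_cong_def dvd_def diff_eq_eq by blast
  then have Q: "S - S ^ p = [:c - c ^ p:] + smult (int p ^ Suc k) Q"
    by (simp add: poly_const_pow add.commute)
  obtain d where d: "c - c ^ p = int p * d"
    using cong_sym[OF fermat_little_int[OF assms(1)]] unfolding cong_iff_dvd_diff dvd_def by blast
  have p0: "p \<noteq> 0" using assms(1) by auto
  have S_d: "S - S ^ p = smult (int p) ([:d:] + smult (int p ^ k) Q)"
    unfolding Q d by (simp add: smult_add_right)
  then have "fermat_quotient_poly p S = [:d:] + smult (int p ^ k) Q"
    unfolding fermat_quotient_poly_def by (intro poly_eqI) (simp add: coeff_map_poly p0)
  then show "S - S ^ p = smult (int p) (fermat_quotient_poly p S)"
    and "coeff_cong (int p ^ k) (fermat_quotient_poly p S) [:(c - c ^ p) div int p:]"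
    using S_d p0 coeff_cong_add_smult[of "int p ^ k" "[:d:]" Q] by (simp_all add: d)
qed

text \<open>\<open>P n\<close> is the reduction modulo \<open>p^n\<close> of a restricted one-variable series representing \<open>g\<close>
  on \<open>\<int>\<^sub>p\<close>; the compatibility condition makes its coefficients \<open>p\<close>-adic integers.\<close>

definition poly_approx :: "nat \<Rightarrow> (nat \<Rightarrow> int poly) \<Rightarrow> (padic_int \<Rightarrow> padic_int) \<Rightarrow> bool" where
  "poly_approx p P g \<longleftrightarrow> (\<forall>n. coeff_cong (int p ^ n) (P (Suc n)) (P n)) \<and>
     (\<forall>u\<in>padic p. \<forall>n. g u n = poly (P n) (u n) mod int p ^ n)"

lemma padic_cong: "u \<in> padic p \<Longrightarrow> [u (Suc n) = u n] (mod int p ^ n)"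
  unfolding padic_def cong_def by auto

lemma poly_approx_padic:
  assumes "p > 0" and "poly_approx p P g" and "u \<in> padic p"
  shows "g u \<in> padic p"
proof -
  have "[poly (P (Suc n)) (u (Suc n)) = poly (P n) (u n)] (mod int p ^ n)" for n
    using assms(2,3) unfolding poly_approx_def by (blast intro: coeff_cong_poly padic_cong)
  then show ?thesis
    using assms unfolding poly_approx_def padic_def
    by (simp add: cong_def mod_mod_cancel le_imp_power_dvd)
qed

lemma poly_approx_affine:
  assumes "a \<in> padic p"
  shows "poly_approx p (\<lambda>n. [:a n, int p ^ m:]) (\<lambda>u. padd p a (pmul p (pint p (int p ^ m)) u))"
  unfolding poly_approx_def
proof (intro conjI allI ballI)
  fix n
  have "int p ^ n dvd a (Suc n) - a n"
    using padic_cong[OF assms] by (simp add: cong_iff_dvd_diff)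
  then show "coeff_cong (int p ^ n) [:a (Suc n), int p ^ m:] [:a n, int p ^ m:]"
    by (simp add: coeff_cong_def)
  fix u
  show "padd p a (pmul p (pint p (int p ^ m)) u) n = poly [:a n, int p ^ m:] (u n) mod int p ^ n"
  proof -
    have "padd p a (pmul p (pint p (int p ^ m)) u) n
        = (a n + (int p ^ m mod int p ^ n * u n) mod int p ^ n) mod int p ^ n"
      by (simp add: padd_def pmul_def pint_def)
    also have "\<dots> = (a n + int p ^ m * u n) mod int p ^ n"
      by (simp add: mod_add_right_eq mod_mult_left_eq)
    finally show ?thesis by (simp add: mult.commute)
  qed
qed

lemma coeff_cong_linear_const: "coeff_cong M [:a, M:] [:a:]"
  using coeff_cong_add_smult[of M "[:a:]" "[:0, 1:]"] by simp

lemma poly_approx_pdelta: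
  assumes p: "prime p" and approx: "poly_approx p P g"
    and const: "\<forall>n. \<exists>c. coeff_cong (int p ^ Suc k) (P n) [:c:]"
  shows "poly_approx p (\<lambda>n. fermat_quotient_poly p (P (Suc n))) (\<lambda>u. pdelta p (g u))"
    and "\<forall>n. \<exists>c. coeff_cong (int p ^ k) (fermat_quotient_poly p (P (Suc n))) [:c:]"
proof -
  define Q where "Q n = fermat_quotient_poly p (P (Suc n))" for n
  have p0: "int p > 0" using p prime_gt_0_nat by auto
  have P_Q: "P (Suc n) - P (Suc n) ^ p = smult (int p) (Q n)" for n
    using const fermat_quotient_poly_cong(1)[OF p] unfolding Q_def by blast
  have "coeff_cong (int p ^ n) (Q (Suc n)) (Q n)" for n
  proof -
    have "coeff_cong (int p ^ Suc n) (P (Suc (Suc n)) - P (Suc (Suc n)) ^ p) (P (Suc n) - P (Suc n) ^ p)"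
      using approx unfolding poly_approx_def by (blast intro: coeff_cong_diff coeff_cong_power)
    then have "coeff_cong (int p * int p ^ n) (smult (int p) (Q (Suc n))) (smult (int p) (Q n))"
      by (simp only: P_Q power_Suc)
    then show ?thesis
      by (rule coeff_cong_smult_cancel) (use p0 in simp)
  qed
  moreover have "pdelta p (g u) n = poly (Q n) (u n) mod int p ^ n" if u: "u \<in> padic p" for u n
  proof -
    define y where "y = poly (P (Suc n)) (u (Suc n))"
    have "[g u (Suc n) = y] (mod int p ^ Suc n)"
      using approx u unfolding poly_approx_def y_def by (simp add: cong_def)
    then have "(g u (Suc n) - g u (Suc n) ^ p) mod int p ^ Suc n = (y - y ^ p) mod int p ^ Suc n"
      unfolding cong_def[symmetric] by (intro cong_diff cong_pow)
    also have "y - y ^ p = int p * poly (Q n) (u (Suc n))"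
      using arg_cong[OF P_Q[of n], of "\<lambda>S. poly S (u (Suc n))"] by (simp add: y_def)
    finally have "pdelta p (g u) n = poly (Q n) (u (Suc n)) mod int p ^ n"
      using p0 by (simp add: pdelta_def mod_mult_mult1)
    then show ?thesis
      using cong_poly[OF padic_cong[OF u]] by (simp add: cong_def)
  qed
  ultimately show "poly_approx p (\<lambda>n. fermat_quotient_poly p (P (Suc n))) (\<lambda>u. pdelta p (g u))"
    unfolding poly_approx_def Q_def by blast
  show "\<forall>n. \<exists>c. coeff_cong (int p ^ k) (fermat_quotient_poly p (P (Suc n))) [:c:]"
    using const fermat_quotient_poly_cong(2)[OF p] by blast
qed

lemma poly_approx_iterated_pdelta:
  assumes p: "prime p" and "poly_approx p P g"
    and "\<forall>n. \<exists>c. coeff_cong (int p ^ k) (P n) [:c:]" and "i \<le> k"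
  shows "\<exists>Q. poly_approx p Q (\<lambda>u. (pdelta p ^^ i) (g u))
    \<and> (\<forall>n. \<exists>c. coeff_cong (int p ^ (k - i)) (Q n) [:c:])"
  using \<open>i \<le> k\<close>
proof (induction i)
  case 0
  then show ?case using assms by auto
next
  case (Suc i)
  then obtain Q where Q: "poly_approx p Q (\<lambda>u. (pdelta p ^^ i) (g u))"
    and Q_const: "\<forall>n. \<exists>c. coeff_cong (int p ^ Suc (k - Suc i)) (Q n) [:c:]"
    by (auto simp: Suc_diff_Suc)
  have "(\<lambda>u. (pdelta p ^^ Suc i) (g u)) = (\<lambda>u. pdelta p ((pdelta p ^^ i) (g u)))"
    by simp
  then show ?case
    using poly_approx_pdelta[OF p Q Q_const] by (simp only:) blast
qed

lemma finite_multi_idx_mdeg_less: "finite {\<alpha>\<in>multi_idx k. mdeg k \<alpha> < N}"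
proof -
  let ?E = "(\<lambda>g i. if i \<le> k then g i else 0) ` PiE {..k} (\<lambda>_. {..<N})"
  have "{\<alpha>\<in>multi_idx k. mdeg k \<alpha> < N} \<subseteq> ?E"
  proof
    fix \<alpha> assume \<alpha>: "\<alpha> \<in> {\<alpha>\<in>multi_idx k. mdeg k \<alpha> < N}"
    have "\<alpha> i < N" if "i \<le> k" for i
      using \<alpha> member_le_sum[of i "{..k}" \<alpha>] that by (auto simp: mdeg_def)
    then have "restrict \<alpha> {..k} \<in> PiE {..k} (\<lambda>_. {..<N})" by auto
    moreover have "\<alpha> = (\<lambda>i. if i \<le> k then restrict \<alpha> {..k} i else 0)"
      using \<alpha> by (auto simp: multi_idx_def)
    ultimately show "\<alpha> \<in> ?E" by blast
  qed
  then show ?thesis by (rule finite_subset) (intro finite_imageI finite_PiE; simp)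
qed

definition vanishing_degree :: "nat \<Rightarrow> ((nat \<Rightarrow> nat) \<Rightarrow> padic_int) \<Rightarrow> nat \<Rightarrow> nat" where
  "vanishing_degree k F n = (LEAST N. \<forall>\<alpha>\<in>multi_idx k. N \<le> mdeg k \<alpha> \<longrightarrow> F \<alpha> n = 0)"

lemma restricted_vanishing_degree:
  assumes "restricted p k F" and "\<alpha> \<in> multi_idx k" and "vanishing_degree k F n \<le> mdeg k \<alpha>"
  shows "F \<alpha> n = 0"
proof -
  have "\<exists>N. \<forall>\<alpha>\<in>multi_idx k. N \<le> mdeg k \<alpha> \<longrightarrow> F \<alpha> n = 0"
    using assms(1) unfolding restricted_def by blast
  from LeastI_ex[OF this] show ?thesis
    using assms(2,3) unfolding vanishing_degree_def by blast
qed

definition subst_poly ::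
    "nat \<Rightarrow> ((nat \<Rightarrow> nat) \<Rightarrow> padic_int) \<Rightarrow> (nat \<Rightarrow> nat \<Rightarrow> int poly) \<Rightarrow> nat \<Rightarrow> nat \<Rightarrow> int poly" where
  "subst_poly k F P N n = (\<Sum>\<alpha>\<in>{\<alpha>\<in>multi_idx k. mdeg k \<alpha> < N}. smult (F \<alpha> n) (\<Prod>i\<le>k. P i n ^ \<alpha> i))"

lemma subst_poly_vanishing_degree:
  assumes "restricted p k F" and "vanishing_degree k F n \<le> N"
  shows "subst_poly k F P N n = subst_poly k F P (vanishing_degree k F n) n"
  unfolding subst_poly_def
  using assms restricted_vanishing_degree[OF assms(1)]
  by (intro sum.mono_neutral_right finite_multi_idx_mdeg_less) auto

lemma ps_partial_subst_poly:
  assumes "\<And>i. i \<le> k \<Longrightarrow> x i n = poly (P i n) y mod int p ^ n"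
  shows "ps_partial p k F x N n = poly (subst_poly k F P N n) y mod int p ^ n"
proof -
  have "[(\<Sum>\<alpha>\<in>{\<alpha>\<in>multi_idx k. mdeg k \<alpha> < N}. F \<alpha> n * (\<Prod>i\<le>k. x i n ^ \<alpha> i))
      = (\<Sum>\<alpha>\<in>{\<alpha>\<in>multi_idx k. mdeg k \<alpha> < N}. F \<alpha> n * (\<Prod>i\<le>k. poly (P i n) y ^ \<alpha> i))] (mod int p ^ n)"
    using assms by (intro cong_sum cong_mult cong_refl cong_prod cong_pow) (simp add: cong_def)
  then show ?thesis
    unfolding ps_partial_def subst_poly_def
    by (simp add: cong_def poly_sum poly_prod poly_power)
qed

lemma poly_approx_ps_sums:
  assumes F: "restricted p k F" and P: "\<forall>i\<le>k. poly_approx p (P i) (g i)"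
    and h: "\<forall>u\<in>padic p. ps_sums p k F (\<lambda>i. g i u) (h u)"
  shows "poly_approx p (\<lambda>n. subst_poly k F P (vanishing_degree k F n) n) h"
  unfolding poly_approx_def
proof (intro conjI allI ballI)
  fix n
  define N where "N = max (vanishing_degree k F n) (vanishing_degree k F (Suc n))"
  have "coeff_cong (int p ^ n) (subst_poly k F P N (Suc n)) (subst_poly k F P N n)"
    unfolding subst_poly_def
  proof (intro coeff_cong_sum coeff_cong_smult coeff_cong_prod coeff_cong_power)
    fix \<alpha> assume "\<alpha> \<in> {\<alpha>\<in>multi_idx k. mdeg k \<alpha> < N}"
    then show "[F \<alpha> (Suc n) = F \<alpha> n] (mod int p ^ n)"
      using F padic_cong unfolding restricted_def by blast
  next
    fix i assume "i \<in> {..k}"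
    then show "coeff_cong (int p ^ n) (P i (Suc n)) (P i n)"
      using P unfolding poly_approx_def by blast
  qed
  moreover have "subst_poly k F P N (Suc n) = subst_poly k F P (vanishing_degree k F (Suc n)) (Suc n)"
    and "subst_poly k F P N n = subst_poly k F P (vanishing_degree k F n) n"
    by (rule subst_poly_vanishing_degree[OF F], simp add: N_def)+
  ultimately show "coeff_cong (int p ^ n) (subst_poly k F P (vanishing_degree k F (Suc n)) (Suc n))
      (subst_poly k F P (vanishing_degree k F n) n)"
    by (simp only:)
next
  fix u n assume u: "u \<in> padic p"
  obtain N0 where N0: "\<forall>N\<ge>N0. h u n = ps_partial p k F (\<lambda>i. g i u) N n"
    using h u unfolding ps_sums_def by blast
  define N where "N = max N0 (vanishing_degree k F n)"
  have "h u n = ps_partial p k F (\<lambda>i. g i u) N n"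
    using N0 unfolding N_def by (blast intro: max.cobounded1)
  also have "\<dots> = poly (subst_poly k F P N n) (u n) mod int p ^ n"
  proof (rule ps_partial_subst_poly)
    fix i assume "i \<le> k"
    then show "g i u n = poly (P i n) (u n) mod int p ^ n"
      using P u unfolding poly_approx_def by blast
  qed
  also have "subst_poly k F P N n = subst_poly k F P (vanishing_degree k F n) n"
    by (rule subst_poly_vanishing_degree[OF F]) (simp add: N_def)
  finally show "h u n = poly (subst_poly k F P (vanishing_degree k F n) n) (u n) mod int p ^ n" .
qed

lemma ps_partial_one_variable:
  "ps_partial p 0 G x N n = (\<Sum>j<N. G (\<lambda>i. if i = 0 then j else 0) n * x 0 n ^ j) mod int p ^ n"
proof -
  have idx: "(\<lambda>i. if i = 0 then \<beta> 0 else 0) = \<beta>" if "\<beta> \<in> multi_idx 0" for \<beta> :: "nat \<Rightarrow> nat"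
    using that by (auto simp: multi_idx_def)
  have "(\<Sum>\<beta>\<in>{\<beta>\<in>multi_idx 0. mdeg 0 \<beta> < N}. G \<beta> n * (\<Prod>i\<le>0. x i n ^ \<beta> i))
      = (\<Sum>j<N. G (\<lambda>i. if i = 0 then j else 0) n * x 0 n ^ j)"
    by (rule sum.reindex_bij_witness[where j = "\<lambda>\<beta>. \<beta> 0" and i = "\<lambda>j i. if i = 0 then j else 0"])
      (auto simp: idx multi_idx_def mdeg_def)
  then show ?thesis unfolding ps_partial_def by simp
qed

lemma restricted_series_of_poly_approx:
  assumes p: "p > 0" and R: "poly_approx p R h"
  shows "\<exists>G. restricted p 0 G \<and> (\<forall>u\<in>padic p. ps_sums p 0 G (\<lambda>_. u) (h u))"
proof (intro exI conjI ballI)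
  define G where "G \<beta> n = coeff (R n) (\<beta> 0) mod int p ^ n" for \<beta> :: "nat \<Rightarrow> nat" and n
  have "G \<beta> \<in> padic p" for \<beta>
  proof -
    have "[coeff (R (Suc n)) (\<beta> 0) = coeff (R n) (\<beta> 0)] (mod int p ^ n)" for n
      using R unfolding poly_approx_def by (blast intro: coeff_cong_coeff)
    then show ?thesis
      using p unfolding padic_def G_def by (simp add: cong_def mod_mod_cancel le_imp_power_dvd)
  qed
  moreover have "\<forall>\<alpha>\<in>multi_idx 0. Suc (degree (R n)) \<le> mdeg 0 \<alpha> \<longrightarrow> G \<alpha> n = 0" for n
    by (auto simp: mdeg_def G_def coeff_eq_0)
  ultimately show "restricted p 0 G"
    unfolding restricted_def by blast
  fix u assume u: "u \<in> padic p"
  have "h u n = ps_partial p 0 G (\<lambda>_. u) N n" if "degree (R n) < N" for n N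
  proof -
    have "[(\<Sum>j<N. G (\<lambda>i. if i = 0 then j else 0) n * u n ^ j)
        = (\<Sum>j<N. coeff (R n) j * u n ^ j)] (mod int p ^ n)"
      unfolding G_def by (intro cong_sum cong_mult cong_refl) (simp add: cong_def)
    also have "(\<Sum>j<N. coeff (R n) j * u n ^ j) = poly (R n) (u n)"
      unfolding poly_altdef using that
      by (intro sum.mono_neutral_right) (auto simp: coeff_eq_0)
    finally show ?thesis
      using R u unfolding poly_approx_def ps_partial_one_variable by (simp add: cong_def)
  qed
  then show "ps_sums p 0 G (\<lambda>_. u) (h u)"
    unfolding ps_sums_def using poly_approx_padic[OF p R u] by (meson Suc_le_lessD)
qed

theorem theorem1p4:
  fixes p m :: nat and f :: "padic_int \<Rightarrow> padic_int"
  assumes "prime p"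
    and "\<forall>a\<in>padic p. f a \<in> padic p"
    and "arith_diff_op p m f"
  shows "analytic_level p m f"
  unfolding analytic_level_def
proof
  fix a assume a: "a \<in> padic p"
  define b where "b u = padd p a (pmul p (pint p (int p ^ m)) u)" for u
  have p0: "p > 0" using \<open>prime p\<close> prime_gt_0_nat by blast
  obtain F where F: "restricted p m F"
    and F_sums: "\<forall>a\<in>padic p. ps_sums p m F (\<lambda>i. (pdelta p ^^ i) a) (f a)"
    using assms(3) unfolding arith_diff_op_def by blast
  have b: "poly_approx p (\<lambda>n. [:a n, int p ^ m:]) b"
    unfolding b_def by (rule poly_approx_affine[OF a])
  have "\<forall>i\<le>m. \<exists>Q. poly_approx p Q (\<lambda>u. (pdelta p ^^ i) (b u))"
    using poly_approx_iterated_pdelta[OF \<open>prime p\<close> b] coeff_cong_linear_const by blast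
  then obtain P where "\<forall>i\<le>m. poly_approx p (P i) (\<lambda>u. (pdelta p ^^ i) (b u))"
    by metis
  moreover have "\<forall>u\<in>padic p. ps_sums p m F (\<lambda>i. (pdelta p ^^ i) (b u)) (f (b u))"
    using F_sums poly_approx_padic[OF p0 b] by blast
  ultimately have "poly_approx p (\<lambda>n. subst_poly m F P (vanishing_degree m F n) n) (\<lambda>u. f (b u))"
    by (intro poly_approx_ps_sums[OF F]) auto
  then show "\<exists>G. restricted p 0 G \<and> (\<forall>u\<in>padic p. ps_sums p 0 G (\<lambda>_. u) (f (b u)))"
    using restricted_series_of_poly_approx[OF p0] by blast
qed

end
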